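(* Let $\Xi$ be a $(k+l)$-graph such that for every vertex $v$ and every $j\in\{1,\dots,l\}$ we have $|v\Xi^{(0,e_j)}|=|\Xi^{(0,e_j)}v|=1$. Then for each vertex $v$ and $m\in\mathbb{N}^l$ there is a unique path $\eta_{v,m}\in\Xi^{(0,m)}v$, and there is a unique action $\alpha$ of $\mathbb{Z}^l$ on the $k$-graph $\Xi^{(\mathbb{N}^k,0)}$ by automorphisms satisfying $\alpha_m(\xi)=(\eta_{r(\xi),m}\xi)(0,d(\xi))$ for all $\xi\in\Xi^{(\mathbb{N}^k,0)}$ and $m\in\mathbb{N}^l$. Moreover, $\Xi$ is isomorphic to $\Xi^{(\mathbb{N}^k,0)}\times_\alpha\mathbb{Z}^l$.
   Context: A $k$-graph is a countable category with a functor $d$ to $\mathbb{N}^k$ with the unique factorisation property; vertices are degree-$0$ morphisms, $\Xi^n=d^{-1}(n)$, $v\Xi^n=\Xi^n\cap r^{-1}(v)$, $\Xi^nv=\Xi^n\cap s^{-1}(v)$. We identify $\mathbb{N}^{k+l}=\mathbb{N}^k\times\mathbb{N}^l$; $e_j$ is the $j$th generator of $\mathbb{N}^l$. For $\lambda$ of degree $p$ and $0\le n\le p$, $\lambda(0,n)$ is the unique path of degree $n$ with $\lambda=\lambda(0,n)\lambda'$ for some $\lambda'$. $\Xi^{(\mathbb{N}^k,0)}$ is the $k$-graph with morphisms $\bigcup_{p\in\mathbb{N}^k}\Xi^{(p,0)}$ and degree given by the first $k$ coordinates of $d$. An automorphism is a bijective degree-preserving functor. Given an action $\alpha$ of $\mathbb{Z}^l$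 on a $k$-graph $\Lambda$, $\Lambda\times_\alpha\mathbb{Z}^l$ is the $(k+l)$-graph with morphisms $\Lambda\times\mathbb{N}^l$, degree $(d(\lambda),m)$, $r(\lambda,m)=(r(\lambda),0)$, $s(\lambda,m)=(\alpha_{-m}(s(\lambda)),0)$, $(\mu,m)(\nu,n)=(\mu\alpha_m(\nu),m+n)$. An isomorphism of $(k+l)$-graphs is a bijective degree-preserving functor. *)

theory Defs
  imports Main "HOL-Library.Countable_Set"
begin

text \<open>Degrees in N^n are represented as functions nat => nat vanishing outside {..<n}.
  N^(k+l) = N^k x N^l: coordinates 0..k-1 are the N^k part, k..k+l-1 the N^l part.
  Categories are represented via their morphisms; objects are identified with
  identity morphisms (those x with src x = x).\<close>

record 'a kgraph =
  mor :: "'a set"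
  src :: "'a \<Rightarrow> 'a"
  rng :: "'a \<Rightarrow> 'a"
  cmp :: "'a \<Rightarrow> 'a \<Rightarrow> 'a"
  dg  :: "'a \<Rightarrow> nat \<Rightarrow> nat"

definition supp_in :: "nat \<Rightarrow> (nat \<Rightarrow> 'b::zero) \<Rightarrow> bool" where
  "supp_in n m \<longleftrightarrow> (\<forall>i\<ge>n. m i = 0)"

definition vadd :: "(nat \<Rightarrow> nat) \<Rightarrow> (nat \<Rightarrow> nat) \<Rightarrow> nat \<Rightarrow> nat" where
  "vadd m n = (\<lambda>i. m i + n i)"

definition kgraph :: "nat \<Rightarrow> 'a kgraph \<Rightarrow> bool" where
  "kgraph k G \<longleftrightarrow>
     countable (mor G) \<and>
     (\<forall>x\<in>mor G. src G x \<in> mor G \<and> rng G x \<in> mor G) \<and>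
     (\<forall>x\<in>mor G. src G (src G x) = src G x \<and> rng G (src G x) = src G x \<and>
                 src G (rng G x) = rng G x \<and> rng G (rng G x) = rng G x) \<and>
     (\<forall>x\<in>mor G. \<forall>y\<in>mor G. src G x = rng G y \<longrightarrow>
         cmp G x y \<in> mor G \<and> src G (cmp G x y) = src G y \<and> rng G (cmp G x y) = rng G x) \<and>
     (\<forall>x\<in>mor G. cmp G (rng G x) x = x \<and> cmp G x (src G x) = x) \<and>
     (\<forall>x\<in>mor G. \<forall>y\<in>mor G. \<forall>z\<in>mor G. src G x = rng G y \<longrightarrow> src G y = rng G z \<longrightarrow>
         cmp G (cmp G x y) z = cmp G x (cmp G y z)) \<and>
     (\<forall>x\<in>mor G. supp_in k (dg G x)) \<and>
     (\<forall>x\<in>mor G. src G x = x \<longrightarrow> dg G x = (\<lambda>_. 0)) \<and>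
     (\<forall>x\<in>mor G. \<forall>y\<in>mor G. src G x = rng G y \<longrightarrow>
         dg G (cmp G x y) = vadd (dg G x) (dg G y)) \<and>
     (\<forall>x\<in>mor G. \<forall>m n. dg G x = vadd m n \<longrightarrow>
        (\<exists>!p. fst p \<in> mor G \<and> snd p \<in> mor G \<and> src G (fst p) = rng G (snd p) \<and>
              dg G (fst p) = m \<and> dg G (snd p) = n \<and> cmp G (fst p) (snd p) = x))"

definition verts :: "'a kgraph \<Rightarrow> 'a set" where
  "verts G = {v \<in> mor G. dg G v = (\<lambda>_. 0)}"

definition seg :: "'a kgraph \<Rightarrow> 'a \<Rightarrow> (nat \<Rightarrow> nat) \<Rightarrow> 'a" where
  "seg G x n = (THE u. \<exists>w. u \<in> mor G \<and> w \<in> mor G \<and> src G u = rng G w \<and>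
                     dg G u = n \<and> cmp G u w = x)"

definition emb :: "nat \<Rightarrow> (nat \<Rightarrow> nat) \<Rightarrow> nat \<Rightarrow> nat" where
  "emb k m = (\<lambda>i. if k \<le> i then m (i - k) else 0)"

definition unitv :: "nat \<Rightarrow> nat \<Rightarrow> nat" where
  "unitv j = (\<lambda>i. if i = j then 1 else 0)"

definition eta :: "nat \<Rightarrow> 'a kgraph \<Rightarrow> 'a \<Rightarrow> (nat \<Rightarrow> nat) \<Rightarrow> 'a" where
  "eta k G v m = (THE e. e \<in> mor G \<and> dg G e = emb k m \<and> src G e = v)"

definition restrictk :: "nat \<Rightarrow> 'a kgraph \<Rightarrow> 'a kgraph" where
  "restrictk k G = \<lparr> mor = {x \<in> mor G. supp_in k (dg G x)}, src = src G, rng = rng G,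
       cmp = cmp G, dg = (\<lambda>x i. if i < k then dg G x i else 0) \<rparr>"

definition is_functor :: "'a kgraph \<Rightarrow> 'b kgraph \<Rightarrow> ('a \<Rightarrow> 'b) \<Rightarrow> bool" where
  "is_functor G H F \<longleftrightarrow>
     (\<forall>x\<in>mor G. F x \<in> mor H \<and> F (src G x) = src H (F x) \<and> F (rng G x) = rng H (F x)) \<and>
     (\<forall>x\<in>mor G. \<forall>y\<in>mor G. src G x = rng G y \<longrightarrow> F (cmp G x y) = cmp H (F x) (F y))"

definition graph_iso :: "'a kgraph \<Rightarrow> 'b kgraph \<Rightarrow> ('a \<Rightarrow> 'b) \<Rightarrow> bool" where
  "graph_iso G H F \<longleftrightarrow> is_functor G H F \<and> (\<forall>x\<in>mor G. dg H (F x) = dg G x) \<and>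
     bij_betw F (mor G) (mor H)"

text \<open>An action of Z^l (elements: nat => int supported in {..<l}) by automorphisms.\<close>
definition is_action :: "nat \<Rightarrow> 'a kgraph \<Rightarrow> ((nat \<Rightarrow> int) \<Rightarrow> 'a \<Rightarrow> 'a) \<Rightarrow> bool" where
  "is_action l L a \<longleftrightarrow>
     (\<forall>m. supp_in l m \<longrightarrow> graph_iso L L (a m)) \<and>
     (\<forall>x\<in>mor L. a (\<lambda>_. 0) x = x) \<and>
     (\<forall>m n. supp_in l m \<longrightarrow> supp_in l n \<longrightarrow>
        (\<forall>x\<in>mor L. a (\<lambda>i. m i + n i) x = a m (a n x)))"

definition intv :: "(nat \<Rightarrow> nat) \<Rightarrow> nat \<Rightarrow> int" where
  "intv m = (\<lambda>i. int (m i))"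

definition crossed :: "nat \<Rightarrow> nat \<Rightarrow> 'a kgraph \<Rightarrow> ((nat \<Rightarrow> int) \<Rightarrow> 'a \<Rightarrow> 'a)
    \<Rightarrow> ('a \<times> (nat \<Rightarrow> nat)) kgraph" where
  "crossed k l L a = \<lparr>
     mor = {(x, m). x \<in> mor L \<and> supp_in l m},
     src = (\<lambda>(x, m). (a (\<lambda>i. - int (m i)) (src L x), (\<lambda>_. 0))),
     rng = (\<lambda>(x, m). (rng L x, (\<lambda>_. 0))),
     cmp = (\<lambda>(x, m) (y, n). (cmp L x (a (intv m) y), vadd m n)),
     dg = (\<lambda>(x, m) i. if i < k then dg L x i else m (i - k)) \<rparr>"

definition prop36_action :: "nat \<Rightarrow> nat \<Rightarrow> 'a kgraph \<Rightarrow> ((nat \<Rightarrow> int) \<Rightarrow> 'a \<Rightarrow> 'a) \<Rightarrow> bool" where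
  "prop36_action k l X a \<longleftrightarrow> is_action l (restrictk k X) a \<and>
     (\<forall>x\<in>mor (restrictk k X). \<forall>m. supp_in l m \<longrightarrow>
        a (intv m) x = seg X (cmp X (eta k X (rng X x) m) x) (dg X x))"

end

theory Submission
  imports Defs
begin

text \<open>
  Factorising a path of degree (0, m) into edges of degree (0, e_j), the hypothesis on these
  edges and unique factorisation give, by induction on |m|, exactly one path \<eta>(v, m) of degree
  (0, m) with source v, and dually exactly one with range v. For \<xi> of degree (n, 0), factorising
  \<eta>(r \<xi>, m) \<xi> in the opposite order gives a commuting square
  \<eta>(r \<xi>, m) \<xi> = \<alpha>_m(\<xi>) \<eta>(s \<xi>, m); pasting such squares shows that every \<alpha>_m is a functor
  and that m \<mapsto> \<alpha>_m is an action of \<nat>^l, and the paths with prescribed range make every \<alpha>_m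
  bijective. An action of \<nat>^l by bijections extends uniquely to \<int>^l, m acting as the composite
  of the positive part of m with the inverse of the negative part. Finally, a path \<lambda> of degree
  (n, m) factors as \<lambda>(0, (n, 0)) \<eta>(s \<lambda>, m), and \<lambda> \<mapsto> (\<lambda>(0, (n, 0)), m) is the required
  isomorphism onto the crossed product.
\<close>

lemma vadd_apply [simp]: "vadd m n i = m i + n i"
  by (simp add: vadd_def)

lemma vadd_commute: "vadd m n = vadd n m"
  by (auto simp: vadd_def)

lemma supp_in_zero [simp]: "supp_in l (\<lambda>_. 0)"
  by (simp add: supp_in_def)

lemma supp_in_vadd: "supp_in l p \<Longrightarrow> supp_in l q \<Longrightarrow> supp_in l (vadd p q)"
  by (simp add: supp_in_def)

lemma supp_in_intv: "supp_in l p \<Longrightarrow> supp_in l (intv p)"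
  by (simp add: supp_in_def intv_def)

lemma supp_in_pos_part: "supp_in l (m :: nat \<Rightarrow> int) \<Longrightarrow> supp_in l (\<lambda>i. nat (m i))"
  by (simp add: supp_in_def)

lemma supp_in_neg_part: "supp_in l (m :: nat \<Rightarrow> int) \<Longrightarrow> supp_in l (\<lambda>i. nat (- m i))"
  by (simp add: supp_in_def)

lemma emb_zero [simp]: "emb k (\<lambda>_. 0) = (\<lambda>_. 0)"
  by (simp add: emb_def)

lemma emb_vadd: "emb k (vadd p q) = vadd (emb k p) (emb k q)"
  by (auto simp: emb_def)

lemma supp_in_sum_eq_0: "supp_in l (p :: nat \<Rightarrow> nat) \<Longrightarrow> sum p {..<l} = 0 \<Longrightarrow> p = (\<lambda>_. 0)"
  by (rule ext) (metis finite_lessThan lessThan_iff not_less sum_eq_0_iff supp_in_def)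

lemma supp_in_sum_eq_Suc:
  assumes "supp_in l (p :: nat \<Rightarrow> nat)" "sum p {..<l} = Suc n"
  obtains j p' where "j < l" "supp_in l p'" "sum p' {..<l} = n" "p = vadd p' (unitv j)"
proof -
  obtain j where j: "j < l" "p j > 0"
    using assms(2) by (metis Zero_not_Suc gr0I lessThan_iff sum.neutral)
  define p' where "p' = p(j := p j - 1)"
  have "sum p {..<l} = sum p' {..<l} + 1"
    using j by (simp add: p'_def sum.remove sum.cong[of _ _ p p'])
  moreover have "supp_in l p'"
    using assms(1) j by (auto simp: supp_in_def p'_def)
  moreover have "p = vadd p' (unitv j)"
    using j by (auto simp: p'_def unitv_def)
  ultimately show ?thesis
    using that j assms(2) by simp
qed

section \<open>Extending an action of \<nat>^l by bijections to \<int>^l\<close>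

locale nat_action =
  fixes l :: nat and A :: "'a set" and f :: "(nat \<Rightarrow> nat) \<Rightarrow> 'a \<Rightarrow> 'a"
  assumes bij: "supp_in l p \<Longrightarrow> bij_betw (f p) A A"
    and zero: "x \<in> A \<Longrightarrow> f (\<lambda>_. 0) x = x"
    and add: "supp_in l p \<Longrightarrow> supp_in l q \<Longrightarrow> x \<in> A \<Longrightarrow> f (vadd p q) x = f p (f q x)"
begin

lemma closed: "supp_in l p \<Longrightarrow> x \<in> A \<Longrightarrow> f p x \<in> A"
  using bij bij_betwE by blast

lemma inj: "supp_in l p \<Longrightarrow> inj_on (f p) A"
  using bij bij_betw_def by blast

lemma commute: "supp_in l p \<Longrightarrow> supp_in l q \<Longrightarrow> x \<in> A \<Longrightarrow> f p (f q x) = f q (f p x)"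
  using add vadd_commute by metis

definition int_ext :: "(nat \<Rightarrow> int) \<Rightarrow> 'a \<Rightarrow> 'a" where
  "int_ext m x = f (\<lambda>i. nat (m i)) (inv_into A (f (\<lambda>i. nat (- m i))) x)"

lemma int_ext_closed_and_eq:
  assumes m: "supp_in l m" and x: "x \<in> A"
  shows "int_ext m x \<in> A" "f (\<lambda>i. nat (- m i)) (int_ext m x) = f (\<lambda>i. nat (m i)) x"
proof -
  let ?P = "\<lambda>i. nat (m i)" and ?N = "\<lambda>i. nat (- m i)"
  have P: "supp_in l ?P" and N: "supp_in l ?N"
    using m by (simp_all add: supp_in_pos_part supp_in_neg_part)
  let ?t = "inv_into A (f ?N) x"
  have "x \<in> f ?N ` A"
    using bij[OF N] x by (simp add: bij_betw_def)
  then have t: "?t \<in> A" "f ?N ?t = x"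
    by (auto simp: inv_into_into f_inv_into_f)
  show "int_ext m x \<in> A"
    unfolding int_ext_def using closed[OF P t(1)] .
  show "f ?N (int_ext m x) = f ?P x"
    unfolding int_ext_def using commute[OF N P t(1)] t(2) by simp
qed

lemma int_ext_eqI:
  assumes a: "supp_in l a" and b: "supp_in l b" and m: "\<And>i. m i = int (b i) - int (a i)"
    and x: "x \<in> A" and y: "y \<in> A" and eq: "f a y = f b x"
  shows "int_ext m x = y"
proof -
  let ?P = "\<lambda>i. nat (m i)" and ?N = "\<lambda>i. nat (- m i)" and ?e = "int_ext m x"
  have m_supp: "supp_in l m"
    using a b m by (simp add: supp_in_def)
  have P: "supp_in l ?P" and N: "supp_in l ?N"
    using m_supp by (simp_all add: supp_in_pos_part supp_in_neg_part)
  have e: "?e \<in> A" "f ?N ?e = f ?P x"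
    using int_ext_closed_and_eq[OF m_supp x] by auto
  have balance: "vadd a ?P = vadd ?N b"
    using m by (auto simp: fun_eq_iff)
  have "f (vadd a ?N) ?e = f (vadd a ?P) x"
    using add[OF a N e(1)] add[OF a P x] e(2) by simp
  also have "\<dots> = f (vadd ?N b) x"
    using balance by simp
  also have "\<dots> = f (vadd a ?N) y"
    using add[OF N b x] add[OF a N y] eq commute[OF a N y] by simp
  finally show ?thesis
    using inj[OF supp_in_vadd[OF a N]] e(1) y by (auto dest: inj_onD)
qed

lemma int_ext_intv: "supp_in l p \<Longrightarrow> x \<in> A \<Longrightarrow> int_ext (intv p) x = f p x"
  by (rule int_ext_eqI[of "\<lambda>_. 0" p]) (simp_all add: intv_def closed zero)

lemma int_ext_zero: "x \<in> A \<Longrightarrow> int_ext (\<lambda>_. 0) x = x"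
  by (rule int_ext_eqI[of "\<lambda>_. 0" "\<lambda>_. 0"]) simp_all

lemma int_ext_neg_intv: "supp_in l p \<Longrightarrow> x \<in> A \<Longrightarrow> int_ext (\<lambda>i. - int (p i)) (f p x) = x"
  by (rule int_ext_eqI[of p "\<lambda>_. 0"]) (simp_all add: closed zero)

lemma int_ext_add:
  assumes m: "supp_in l m" and n: "supp_in l n" and x: "x \<in> A"
  shows "int_ext (\<lambda>i. m i + n i) x = int_ext m (int_ext n x)"
proof -
  let ?Pm = "\<lambda>i. nat (m i)" and ?Nm = "\<lambda>i. nat (- m i)"
  let ?Pn = "\<lambda>i. nat (n i)" and ?Nn = "\<lambda>i. nat (- n i)"
  let ?z = "int_ext n x"
  let ?w = "int_ext m ?z"
  have Pm: "supp_in l ?Pm" and Nm: "supp_in l ?Nm" and Pn: "supp_in l ?Pn" and Nn: "supp_in l ?Nn"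
    using m n by (simp_all add: supp_in_pos_part supp_in_neg_part)
  have z: "?z \<in> A" "f ?Nn ?z = f ?Pn x"
    using int_ext_closed_and_eq[OF n x] by auto
  have w: "?w \<in> A" "f ?Nm ?w = f ?Pm ?z"
    using int_ext_closed_and_eq[OF m z(1)] by auto
  have "f (vadd ?Nn ?Nm) ?w = f ?Nn (f ?Pm ?z)"
    using add[OF Nn Nm w(1)] w(2) by simp
  also have "\<dots> = f ?Pm (f ?Pn x)"
    using commute[OF Nn Pm z(1)] z(2) by simp
  also have "\<dots> = f (vadd ?Pm ?Pn) x"
    using add[OF Pm Pn x] by simp
  finally show ?thesis
    by (intro int_ext_eqI[OF supp_in_vadd[OF Nn Nm] supp_in_vadd[OF Pm Pn]] x w(1)) auto
qed

lemma int_ext_unique: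
  assumes closed_b: "\<And>m x. supp_in l m \<Longrightarrow> x \<in> A \<Longrightarrow> b m x \<in> A"
    and add_b: "\<And>m n x. supp_in l m \<Longrightarrow> supp_in l n \<Longrightarrow> x \<in> A \<Longrightarrow>
                  b (\<lambda>i. m i + n i) x = b m (b n x)"
    and nat_b: "\<And>p x. supp_in l p \<Longrightarrow> x \<in> A \<Longrightarrow> b (intv p) x = f p x"
    and m: "supp_in l m" and x: "x \<in> A"
  shows "b m x = int_ext m x"
proof -
  let ?P = "\<lambda>i. nat (m i)" and ?N = "\<lambda>i. nat (- m i)"
  have P: "supp_in l ?P" and N: "supp_in l ?N"
    using m by (simp_all add: supp_in_pos_part supp_in_neg_part)
  have "f ?N (b m x) = b (\<lambda>i. intv ?N i + m i) x"
    using nat_b[OF N closed_b[OF m x]] add_b[OF supp_in_intv[OF N] m x] by simp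
  also have "(\<lambda>i. intv ?N i + m i) = intv ?P"
    by (auto simp: intv_def)
  finally have "f ?N (b m x) = f ?P x"
    using nat_b[OF P x] by simp
  then show ?thesis
    by (intro int_ext_eqI[OF N P _ x closed_b[OF m x], symmetric]) auto
qed

end

lemma restrictk_simps [simp]:
  "mor (restrictk k X) = {x \<in> mor X. supp_in k (dg X x)}"
  "src (restrictk k X) = src X" "rng (restrictk k X) = rng X" "cmp (restrictk k X) = cmp X"
  "dg (restrictk k X) = (\<lambda>x i. if i < k then dg X x i else 0)"
  by (simp_all add: restrictk_def)

lemma crossed_simps [simp]:
  "mor (crossed k l L a) = {(x, m). x \<in> mor L \<and> supp_in l m}"
  "src (crossed k l L a) (x, m) = (a (\<lambda>i. - int (m i)) (src L x), (\<lambda>_. 0))"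
  "rng (crossed k l L a) (x, m) = (rng L x, (\<lambda>_. 0))"
  "cmp (crossed k l L a) (x, m) (y, n) = (cmp L x (a (intv m) y), vadd m n)"
  "dg (crossed k l L a) (x, m) = (\<lambda>i. if i < k then dg L x i else m (i - k))"
  by (simp_all add: crossed_def)

lemma graph_iso_comp:
  assumes f: "graph_iso G H f" and g: "graph_iso H K g"
  shows "graph_iso G K (\<lambda>x. g (f x))"
proof -
  have "is_functor G K (\<lambda>x. g (f x))"
    unfolding is_functor_def
  proof (intro conjI ballI impI)
    fix x assume x: "x \<in> mor G"
    then have "f x \<in> mor H" "f (src G x) = src H (f x)" "f (rng G x) = rng H (f x)"
      using f by (simp_all add: graph_iso_def is_functor_def)
    then show "g (f x) \<in> mor K" "g (f (src G x)) = src K (g (f x))"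
      "g (f (rng G x)) = rng K (g (f x))"
      using g by (simp_all add: graph_iso_def is_functor_def)
  next
    fix x y assume "x \<in> mor G" "y \<in> mor G" "src G x = rng G y"
    then have "f x \<in> mor H" "f y \<in> mor H" "src H (f x) = rng H (f y)"
      "f (cmp G x y) = cmp H (f x) (f y)"
      using f unfolding graph_iso_def is_functor_def by metis+
    then show "g (f (cmp G x y)) = cmp K (g (f x)) (g (f y))"
      using g by (simp add: graph_iso_def is_functor_def)
  qed
  moreover have "bij_betw (\<lambda>x. g (f x)) (mor G) (mor K)"
    using bij_betw_trans f g unfolding graph_iso_def comp_def by blast
  ultimately show ?thesis
    using f g unfolding graph_iso_def is_functor_def by simp
qed

lemma graph_iso_inv:
  assumes f: "graph_iso G H f"
    and src_rng_closed: "\<forall>x\<in>mor G. src G x \<in> mor G \<and> rng G x \<in> mor G"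
    and cmp_closed: "\<forall>x\<in>mor G. \<forall>y\<in>mor G. src G x = rng G y \<longrightarrow> cmp G x y \<in> mor G"
  shows "graph_iso H G (inv_into (mor G) f)"
proof -
  let ?g = "inv_into (mor G) f"
  have bij: "bij_betw f (mor G) (mor H)" and dg_f: "\<forall>x\<in>mor G. dg H (f x) = dg G x"
    and f_src: "\<And>x. x \<in> mor G \<Longrightarrow> f (src G x) = src H (f x)"
    and f_rng: "\<And>x. x \<in> mor G \<Longrightarrow> f (rng G x) = rng H (f x)"
    and f_cmp: "\<And>x y. x \<in> mor G \<Longrightarrow> y \<in> mor G \<Longrightarrow> src G x = rng G y \<Longrightarrow>
                  f (cmp G x y) = cmp H (f x) (f y)"
    using f unfolding graph_iso_def is_functor_def by auto
  then have inj: "inj_on f (mor G)" and g_mor: "\<And>y. y \<in> mor H \<Longrightarrow> ?g y \<in> mor G"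
    and f_g: "\<And>y. y \<in> mor H \<Longrightarrow> f (?g y) = y" and g_f: "\<And>x. x \<in> mor G \<Longrightarrow> ?g (f x) = x"
    by (auto simp: bij_betw_def inv_into_into f_inv_into_f)
  have "is_functor H G ?g"
    unfolding is_functor_def
  proof (intro conjI ballI impI)
    fix y assume y: "y \<in> mor H"
    show "?g y \<in> mor G"
      using g_mor[OF y] .
    have "src H y = f (src G (?g y))" "rng H y = f (rng G (?g y))"
      using f_src[OF g_mor[OF y]] f_rng[OF g_mor[OF y]] f_g[OF y] by simp_all
    then show "?g (src H y) = src G (?g y)" "?g (rng H y) = rng G (?g y)"
      using g_f src_rng_closed g_mor[OF y] by simp_all
  next
    fix y y' assume y: "y \<in> mor H" and y': "y' \<in> mor H" and yy': "src H y = rng H y'"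
    have "f (src G (?g y)) = f (rng G (?g y'))"
      using f_src[OF g_mor[OF y]] f_rng[OF g_mor[OF y']] f_g y y' yy' by simp
    then have "src G (?g y) = rng G (?g y')"
      using inj_onD[OF inj] src_rng_closed g_mor y y' by blast
    then show "?g (cmp H y y') = cmp G (?g y) (?g y')"
      using f_cmp[OF g_mor[OF y] g_mor[OF y']] f_g y y' g_f cmp_closed g_mor by metis
  qed
  moreover have "\<forall>y\<in>mor H. dg G (?g y) = dg H y"
    using dg_f g_mor f_g by metis
  ultimately show ?thesis
    using bij_betw_inv_into[OF bij] unfolding graph_iso_def by blast
qed

definition opposite :: "'a kgraph \<Rightarrow> 'a kgraph" where
  "opposite X = X\<lparr>src := rng X, rng := src X, cmp := \<lambda>x y. cmp X y x\<rparr>"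

lemma opposite_simps [simp]:
  "mor (opposite X) = mor X" "src (opposite X) = rng X" "rng (opposite X) = src X"
  "cmp (opposite X) x y = cmp X y x" "dg (opposite X) = dg X"
  by (simp_all add: opposite_def)

lemma verts_opposite [simp]: "verts (opposite X) = verts X"
  by (simp add: verts_def)

section \<open>Unique factorisation\<close>

locale higher_rank_graph =
  fixes K :: nat and X :: "'a kgraph"
  assumes kgraph: "kgraph K X"
begin

lemma kgraph_conds:
  "countable (mor X)"
  "\<forall>x\<in>mor X. src X x \<in> mor X \<and> rng X x \<in> mor X"
  "\<forall>x\<in>mor X. src X (src X x) = src X x \<and> rng X (src X x) = src X x \<and>
              src X (rng X x) = rng X x \<and> rng X (rng X x) = rng X x"
  "\<forall>x\<in>mor X. \<forall>y\<in>mor X. src X x = rng X y \<longrightarrow>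
      cmp X x y \<in> mor X \<and> src X (cmp X x y) = src X y \<and> rng X (cmp X x y) = rng X x"
  "\<forall>x\<in>mor X. cmp X (rng X x) x = x \<and> cmp X x (src X x) = x"
  "\<forall>x\<in>mor X. \<forall>y\<in>mor X. \<forall>z\<in>mor X. src X x = rng X y \<longrightarrow> src X y = rng X z \<longrightarrow>
      cmp X (cmp X x y) z = cmp X x (cmp X y z)"
  "\<forall>x\<in>mor X. supp_in K (dg X x)"
  "\<forall>x\<in>mor X. src X x = x \<longrightarrow> dg X x = (\<lambda>_. 0)"
  "\<forall>x\<in>mor X. \<forall>y\<in>mor X. src X x = rng X y \<longrightarrow> dg X (cmp X x y) = vadd (dg X x) (dg X y)"
  "\<forall>x\<in>mor X. \<forall>m n. dg X x = vadd m n \<longrightarrow>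
     (\<exists>!p. fst p \<in> mor X \<and> snd p \<in> mor X \<and> src X (fst p) = rng X (snd p) \<and>
           dg X (fst p) = m \<and> dg X (snd p) = n \<and> cmp X (fst p) (snd p) = x)"
  by (insert kgraph[unfolded kgraph_def], elim conjE, assumption)+

lemma src_mor [simp]: "x \<in> mor X \<Longrightarrow> src X x \<in> mor X"
  and rng_mor [simp]: "x \<in> mor X \<Longrightarrow> rng X x \<in> mor X"
  and src_src [simp]: "x \<in> mor X \<Longrightarrow> src X (src X x) = src X x"
  and rng_src [simp]: "x \<in> mor X \<Longrightarrow> rng X (src X x) = src X x"
  and src_rng [simp]: "x \<in> mor X \<Longrightarrow> src X (rng X x) = rng X x"
  and rng_rng [simp]: "x \<in> mor X \<Longrightarrow> rng X (rng X x) = rng X x"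
  and cmp_rng [simp]: "x \<in> mor X \<Longrightarrow> cmp X (rng X x) x = x"
  and cmp_src [simp]: "x \<in> mor X \<Longrightarrow> cmp X x (src X x) = x"
  using kgraph_conds(2,3,5) by blast+

lemma cmp_mor [simp]: "x \<in> mor X \<Longrightarrow> y \<in> mor X \<Longrightarrow> src X x = rng X y \<Longrightarrow> cmp X x y \<in> mor X"
  and src_cmp [simp]: "x \<in> mor X \<Longrightarrow> y \<in> mor X \<Longrightarrow> src X x = rng X y \<Longrightarrow> src X (cmp X x y) = src X y"
  and rng_cmp [simp]: "x \<in> mor X \<Longrightarrow> y \<in> mor X \<Longrightarrow> src X x = rng X y \<Longrightarrow> rng X (cmp X x y) = rng X x"
  and dg_cmp [simp]: "x \<in> mor X \<Longrightarrow> y \<in> mor X \<Longrightarrow> src X x = rng X y \<Longrightarrow>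
                        dg X (cmp X x y) = vadd (dg X x) (dg X y)"
  using kgraph_conds(4,9) by blast+

lemma cmp_assoc:
  "x \<in> mor X \<Longrightarrow> y \<in> mor X \<Longrightarrow> z \<in> mor X \<Longrightarrow> src X x = rng X y \<Longrightarrow> src X y = rng X z \<Longrightarrow>
   cmp X (cmp X x y) z = cmp X x (cmp X y z)"
  using kgraph_conds(6) by blast

lemma dg_supp_in: "x \<in> mor X \<Longrightarrow> supp_in K (dg X x)"
  using kgraph_conds(7) by blast

lemma dg_src: "x \<in> mor X \<Longrightarrow> dg X (src X x) = (\<lambda>_. 0)"
  using kgraph_conds(8) by simp

lemma dg_rng: "x \<in> mor X \<Longrightarrow> dg X (rng X x) = (\<lambda>_. 0)"
  using kgraph_conds(8) by simp

lemma unique_factorisation: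
  "x \<in> mor X \<Longrightarrow> dg X x = vadd m n \<Longrightarrow>
   \<exists>!p. fst p \<in> mor X \<and> snd p \<in> mor X \<and> src X (fst p) = rng X (snd p) \<and>
        dg X (fst p) = m \<and> dg X (snd p) = n \<and> cmp X (fst p) (snd p) = x"
  using kgraph_conds(10) by blast

lemma factorisation_exists:
  assumes "x \<in> mor X" "dg X x = vadd m n"
  obtains u w where "u \<in> mor X" "w \<in> mor X" "src X u = rng X w" "dg X u = m" "dg X w = n"
    "cmp X u w = x"
  using unique_factorisation[OF assms] by auto

lemma factorisation_unique:
  assumes "u \<in> mor X" "w \<in> mor X" "u' \<in> mor X" "w' \<in> mor X"
    and "src X u = rng X w" "src X u' = rng X w'" "dg X u = dg X u'"
    and "cmp X u w = cmp X u' w'"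
  shows "u = u'" "w = w'"
proof -
  have "vadd (dg X u) (dg X w) = vadd (dg X u') (dg X w')"
    using dg_cmp[OF assms(1,2,5)] dg_cmp[OF assms(3,4,6)] assms(8) by simp
  then have "dg X w = dg X w'"
    using assms(7) by (auto simp: fun_eq_iff)
  moreover have "\<exists>!p. fst p \<in> mor X \<and> snd p \<in> mor X \<and> src X (fst p) = rng X (snd p) \<and>
        dg X (fst p) = dg X u \<and> dg X (snd p) = dg X w \<and> cmp X (fst p) (snd p) = cmp X u w"
    using unique_factorisation[OF cmp_mor dg_cmp] assms(1,2,5) by blast
  ultimately have "(u, w) = (u', w')"
    using assms by (metis (no_types, lifting) fst_conv snd_conv)
  then show "u = u'" "w = w'"
    by simp_all
qed

lemma higher_rank_graph_opposite: "higher_rank_graph K (opposite X)"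
proof -
  have "\<exists>!p. fst p \<in> mor X \<and> snd p \<in> mor X \<and> rng X (fst p) = src X (snd p) \<and>
              dg X (fst p) = m \<and> dg X (snd p) = n \<and> cmp X (snd p) (fst p) = x"
    if x: "x \<in> mor X" "dg X x = vadd m n" for x m n
  proof -
    have "dg X x = vadd n m"
      using x(2) vadd_commute[of n m] by simp
    then obtain u w where uw: "u \<in> mor X" "w \<in> mor X" "src X u = rng X w" "dg X u = n"
      "dg X w = m" "cmp X u w = x"
      by (rule factorisation_exists[OF x(1)])
    show ?thesis
    proof (rule ex1I[of _ "(w, u)"])
      fix p
      assume p: "fst p \<in> mor X \<and> snd p \<in> mor X \<and> rng X (fst p) = src X (snd p) \<and>
                 dg X (fst p) = m \<and> dg X (snd p) = n \<and> cmp X (snd p) (fst p) = x"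
      have "snd p = u"
        by (rule factorisation_unique(1)[of "snd p" "fst p" u w]) (use p uw in auto)
      moreover have "fst p = w"
        by (rule factorisation_unique(2)[of "snd p" "fst p" u w]) (use p uw in auto)
      ultimately show "p = (w, u)"
        by (simp add: prod_eq_iff)
    qed (use uw in simp)
  qed
  moreover have "dg X x = (\<lambda>_. 0)" if "x \<in> mor X" "rng X x = x" for x
    using that dg_rng by metis
  ultimately show ?thesis
    unfolding higher_rank_graph_def kgraph_def opposite_simps
    by (intro conjI ballI impI allI)
      (simp_all add: kgraph_conds(1) dg_supp_in cmp_assoc vadd_commute)
qed

lemma degree_zero_is_vertex:
  assumes "x \<in> mor X" "dg X x = (\<lambda>_. 0)"
  shows "rng X x = x" "src X x = x"
proof -
  have "rng X x = x" "x = src X x"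
    by (rule factorisation_unique[of "rng X x" x x "src X x"];
        use assms dg_rng[of x] in simp)+
  then show "rng X x = x" "src X x = x"
    by simp_all
qed

lemma src_verts [simp]: "x \<in> mor X \<Longrightarrow> src X x \<in> verts X"
  and rng_verts [simp]: "x \<in> mor X \<Longrightarrow> rng X x \<in> verts X"
  by (simp_all add: verts_def dg_src dg_rng)

lemma verts_mor [simp]: "v \<in> verts X \<Longrightarrow> v \<in> mor X"
  and verts_dg [simp]: "v \<in> verts X \<Longrightarrow> dg X v = (\<lambda>_. 0)"
  and verts_src [simp]: "v \<in> verts X \<Longrightarrow> src X v = v"
  and verts_rng [simp]: "v \<in> verts X \<Longrightarrow> rng X v = v"
  using degree_zero_is_vertex by (auto simp: verts_def)

lemma seg_eqI:
  assumes "u \<in> mor X" "w \<in> mor X" "src X u = rng X w" "cmp X u w = x" "dg X u = n"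
  shows "seg X x n = u"
  unfolding seg_def
proof (rule the_equality)
  fix u'
  assume "\<exists>w'. u' \<in> mor X \<and> w' \<in> mor X \<and> src X u' = rng X w' \<and> dg X u' = n \<and> cmp X u' w' = x"
  then obtain w' where "u' \<in> mor X" "w' \<in> mor X" "src X u' = rng X w'" "dg X u' = n"
    "cmp X u' w' = x"
    by blast
  then show "u' = u"
    using assms factorisation_unique(1) by metis
qed (use assms in blast)

lemma unique_path_from_unique_steps:
  assumes steps: "\<forall>v\<in>verts X. \<forall>j<l. \<exists>!x. x \<in> mor X \<and> dg X x = emb k (unitv j) \<and> src X x = v"
    and "supp_in l p" "v \<in> verts X"
  shows "\<exists>!e. e \<in> mor X \<and> dg X e = emb k p \<and> src X e = v"
  using assms(2,3)
proof (induction "sum p {..<l}" arbitrary: p v)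
  case 0
  then have p: "p = (\<lambda>_. 0)"
    using supp_in_sum_eq_0 by metis
  show ?case
    by (rule ex1I[of _ v]) (use 0 p degree_zero_is_vertex in auto)
next
  case (Suc n)
  obtain j p' where j: "j < l" "supp_in l p'" "sum p' {..<l} = n" "p = vadd p' (unitv j)"
    using supp_in_sum_eq_Suc[OF Suc.prems(1) Suc.hyps(2)[symmetric]] by blast
  obtain x where x: "x \<in> mor X" "dg X x = emb k (unitv j)" "src X x = v"
    and x_unique: "\<And>x'. x' \<in> mor X \<Longrightarrow> dg X x' = emb k (unitv j) \<Longrightarrow> src X x' = v \<Longrightarrow> x' = x"
    using steps Suc.prems(2) j(1) by metis
  obtain y where y: "y \<in> mor X" "dg X y = emb k p'" "src X y = rng X x"
    and y_unique: "\<And>y'. y' \<in> mor X \<Longrightarrow> dg X y' = emb k p' \<Longrightarrow> src X y' = rng X x \<Longrightarrow> y' = y"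
    using Suc.hyps(1)[OF j(3)[symmetric] j(2) rng_verts[OF x(1)]] by metis
  have dg_p: "emb k p = vadd (emb k p') (emb k (unitv j))"
    using j(4) emb_vadd by simp
  show ?case
  proof (rule ex1I[of _ "cmp X y x"])
    fix e
    assume e: "e \<in> mor X \<and> dg X e = emb k p \<and> src X e = v"
    then obtain u w where uw: "u \<in> mor X" "w \<in> mor X" "src X u = rng X w" "dg X u = emb k p'"
      "dg X w = emb k (unitv j)" "cmp X u w = e"
      using factorisation_exists dg_p by metis
    have "w = x"
      using x_unique uw e by (metis src_cmp)
    then have "u = y"
      using y_unique uw by metis
    then show "e = cmp X y x"
      using uw \<open>w = x\<close> by simp
  qed (use x y dg_p in simp)
qed

end

section \<open>The action \<alpha> on the paths of degree (n, 0)\<close>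

lemma card_Collect_eq_1_Ex1: "card {x. P x} = 1 \<Longrightarrow> \<exists>!x. P x"
  by (metis card_1_singletonE mem_Collect_eq singletonD singletonI)

locale unique_l_edges = higher_rank_graph "k + l" X for k l :: nat and X :: "'a kgraph" +
  assumes unit_edges: "\<forall>v\<in>verts X. \<forall>j<l.
           card {x \<in> mor X. dg X x = emb k (unitv j) \<and> rng X x = v} = 1 \<and>
           card {x \<in> mor X. dg X x = emb k (unitv j) \<and> src X x = v} = 1"
begin

lemma unit_edges_unique:
  "\<forall>v\<in>verts X. \<forall>j<l. \<exists>!x. x \<in> mor X \<and> dg X x = emb k (unitv j) \<and> src X x = v"
  "\<forall>v\<in>verts X. \<forall>j<l. \<exists>!x. x \<in> mor X \<and> dg X x = emb k (unitv j) \<and> rng X x = v"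
  using unit_edges by (auto intro!: card_Collect_eq_1_Ex1)

lemma path_src_unique:
  "supp_in l p \<Longrightarrow> v \<in> verts X \<Longrightarrow> \<exists>!e. e \<in> mor X \<and> dg X e = emb k p \<and> src X e = v"
  by (rule unique_path_from_unique_steps[OF unit_edges_unique(1)])

lemma path_rng_unique:
  "supp_in l p \<Longrightarrow> v \<in> verts X \<Longrightarrow> \<exists>!e. e \<in> mor X \<and> dg X e = emb k p \<and> rng X e = v"
  using higher_rank_graph.unique_path_from_unique_steps[OF higher_rank_graph_opposite]
    unit_edges_unique(2)
  by simp

lemma eta_path:
  assumes "supp_in l p" "v \<in> verts X"
  shows "eta k X v p \<in> mor X \<and> dg X (eta k X v p) = emb k p \<and> src X (eta k X v p) = v"
  unfolding eta_def by (rule theI'[OF path_src_unique[OF assms]])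

lemma eta_mor [simp]: "supp_in l p \<Longrightarrow> v \<in> verts X \<Longrightarrow> eta k X v p \<in> mor X"
  and eta_dg [simp]: "supp_in l p \<Longrightarrow> v \<in> verts X \<Longrightarrow> dg X (eta k X v p) = emb k p"
  and eta_src [simp]: "supp_in l p \<Longrightarrow> v \<in> verts X \<Longrightarrow> src X (eta k X v p) = v"
  using eta_path by blast+

lemma eta_eqI:
  assumes "supp_in l p" "e \<in> mor X" "dg X e = emb k p"
  shows "eta k X (src X e) p = e"
  unfolding eta_def
  by (rule the1_equality[OF path_src_unique[OF assms(1) src_verts[OF assms(2)]]]) (use assms in simp)

lemma eta_zero: "v \<in> verts X \<Longrightarrow> eta k X v (\<lambda>_. 0) = v"
  using eta_eqI[of "\<lambda>_. 0" v] by simp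

lemma eta_vadd:
  assumes p: "supp_in l p" and q: "supp_in l q" and v: "v \<in> verts X"
  shows "eta k X v (vadd p q) = cmp X (eta k X (rng X (eta k X v q)) p) (eta k X v q)"
  using eta_eqI[OF supp_in_vadd[OF p q], of "cmp X (eta k X (rng X (eta k X v q)) p) (eta k X v q)"]
    assms by (simp add: emb_vadd)

lemma rng_eta_inj:
  assumes p: "supp_in l p" and "v \<in> verts X" "w \<in> verts X"
    and "rng X (eta k X v p) = rng X (eta k X w p)"
  shows "v = w"
proof -
  have "eta k X v p = eta k X w p"
    using path_rng_unique[OF p rng_verts[OF eta_mor[OF p \<open>w \<in> verts X\<close>]]] assms by auto
  then show ?thesis
    using assms eta_src by metis
qed

definition alpha :: "(nat \<Rightarrow> nat) \<Rightarrow> 'a \<Rightarrow> 'a" where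
  "alpha p x = seg X (cmp X (eta k X (rng X x) p) x) (dg X x)"

text \<open>By unique factorisation, \<open>alpha p x\<close> is the unique \<open>u\<close> with
  \<open>eta (rng x) p \<cdot> x = u \<cdot> eta (src x) p\<close>.\<close>

lemma alpha_square:
  assumes p: "supp_in l p" and x: "x \<in> mor X"
  shows "alpha p x \<in> mor X" "dg X (alpha p x) = dg X x"
    "src X (alpha p x) = rng X (eta k X (src X x) p)"
    "cmp X (alpha p x) (eta k X (src X x) p) = cmp X (eta k X (rng X x) p) x"
proof -
  let ?e = "eta k X (rng X x) p"
  have "dg X (cmp X ?e x) = vadd (dg X x) (emb k p)"
    using p x by (simp add: vadd_commute)
  then obtain u w where uw: "u \<in> mor X" "w \<in> mor X" "src X u = rng X w" "dg X u = dg X x"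
    "dg X w = emb k p" "cmp X u w = cmp X ?e x"
    using factorisation_exists p x by (metis cmp_mor eta_mor eta_src rng_verts)
  have "alpha p x = u"
    unfolding alpha_def by (rule seg_eqI[OF uw(1-3) uw(6) uw(4)])
  moreover have "src X w = src X x"
    using uw p x by (metis eta_mor eta_src rng_verts src_cmp)
  then have "eta k X (src X x) p = w"
    using eta_eqI[OF p uw(2) uw(5)] by simp
  ultimately show "alpha p x \<in> mor X" "dg X (alpha p x) = dg X x"
    "src X (alpha p x) = rng X (eta k X (src X x) p)"
    "cmp X (alpha p x) (eta k X (src X x) p) = cmp X (eta k X (rng X x) p) x"
    using uw by simp_all
qed

lemma alpha_mor [simp]: "supp_in l p \<Longrightarrow> x \<in> mor X \<Longrightarrow> alpha p x \<in> mor X"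
  and alpha_dg [simp]: "supp_in l p \<Longrightarrow> x \<in> mor X \<Longrightarrow> dg X (alpha p x) = dg X x"
  and alpha_src: "supp_in l p \<Longrightarrow> x \<in> mor X \<Longrightarrow> src X (alpha p x) = rng X (eta k X (src X x) p)"
  using alpha_square by blast+

lemma alpha_eqI:
  assumes p: "supp_in l p" and x: "x \<in> mor X" and u: "u \<in> mor X" "dg X u = dg X x"
    "src X u = rng X (eta k X (src X x) p)"
    "cmp X u (eta k X (src X x) p) = cmp X (eta k X (rng X x) p) x"
  shows "alpha p x = u"
  unfolding alpha_def by (rule seg_eqI[OF u(1) eta_mor[OF p src_verts[OF x]] u(3) u(4) u(2)])

lemma alpha_rng:
  assumes p: "supp_in l p" and x: "x \<in> mor X"
  shows "rng X (alpha p x) = rng X (eta k X (rng X x) p)"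
  using rng_cmp[of "alpha p x" "eta k X (src X x) p"] rng_cmp[of "eta k X (rng X x) p" x]
    alpha_square[OF p x] p x by simp

lemma alpha_vertex:
  assumes p: "supp_in l p" and v: "v \<in> verts X"
  shows "alpha p v = rng X (eta k X v p)"
  by (rule alpha_eqI[OF p]) (use p v cmp_src[of "eta k X v p"] in simp_all)

lemma alpha_zero: "x \<in> mor X \<Longrightarrow> alpha (\<lambda>_. 0) x = x"
  by (rule alpha_eqI) (simp_all add: eta_zero)

lemma alpha_cmp:
  assumes p: "supp_in l p" and x: "x \<in> mor X" and y: "y \<in> mor X" and xy: "src X x = rng X y"
  shows "alpha p (cmp X x y) = cmp X (alpha p x) (alpha p y)"
proof -
  let ?u = "alpha p x" and ?v = "alpha p y"
  let ?ex = "eta k X (src X x) p" and ?ey = "eta k X (src X y) p" and ?ex' = "eta k X (rng X x) p"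
  have mor: "?ex \<in> mor X" "?ey \<in> mor X" "?ex' \<in> mor X" "?u \<in> mor X" "?v \<in> mor X"
    using p x y by simp_all
  have sq_x: "cmp X ?u ?ex = cmp X ?ex' x"
    using alpha_square(4)[OF p x] .
  have sq_y: "cmp X ?v ?ey = cmp X ?ex y"
    using alpha_square(4)[OF p y] xy by simp
  have src_u: "src X ?u = rng X ?ex" and src_v: "src X ?v = rng X ?ey"
    using alpha_src p x y by blast+
  have uv: "src X ?u = rng X ?v"
    using src_u alpha_rng[OF p y] xy by simp
  have src_ex': "src X ?ex' = rng X x" and src_ex: "src X ?ex = rng X y"
    using p x y xy by simp_all
  show ?thesis
  proof (rule alpha_eqI[OF p])
    show "cmp X x y \<in> mor X" "cmp X ?u ?v \<in> mor X"
      "dg X (cmp X ?u ?v) = dg X (cmp X x y)"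
      "src X (cmp X ?u ?v) = rng X (eta k X (src X (cmp X x y)) p)"
      using mor uv x y xy p src_v by simp_all
    have "cmp X (cmp X ?u ?v) ?ey = cmp X ?u (cmp X ?ex y)"
      using cmp_assoc[OF mor(4,5,2) uv src_v] sq_y by simp
    also have "\<dots> = cmp X (cmp X ?ex' x) y"
      using cmp_assoc[OF mor(4,1) y src_u src_ex] sq_x by simp
    also have "\<dots> = cmp X ?ex' (cmp X x y)"
      using cmp_assoc[OF mor(3) x y src_ex' xy] .
    finally show "cmp X (cmp X ?u ?v) (eta k X (src X (cmp X x y)) p) =
        cmp X (eta k X (rng X (cmp X x y)) p) (cmp X x y)"
      using x y xy by simp
  qed
qed

lemma alpha_vadd:
  assumes p: "supp_in l p" and q: "supp_in l q" and x: "x \<in> mor X"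
  shows "alpha (vadd p q) x = alpha p (alpha q x)"
proof -
  let ?u = "alpha q x" and ?eq = "eta k X (src X x) q" and ?eq' = "eta k X (rng X x) q"
  let ?ep = "eta k X (src X ?u) p" and ?ep' = "eta k X (rng X ?u) p"
  have mor: "?u \<in> mor X" "alpha p ?u \<in> mor X" "?eq \<in> mor X" "?eq' \<in> mor X"
    "?ep \<in> mor X" "?ep' \<in> mor X"
    using p q x by simp_all
  have src_u: "src X ?u = rng X ?eq" and rng_u: "rng X ?u = rng X ?eq'"
    using alpha_src[OF q x] alpha_rng[OF q x] .
  have src_pu: "src X (alpha p ?u) = rng X ?ep"
    using alpha_src[OF p mor(1)] .
  have src_ep: "src X ?ep = rng X ?eq" and src_ep': "src X ?ep' = rng X ?eq'"
    and src_eq': "src X ?eq' = rng X x"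
    using p q x mor(1) src_u rng_u by simp_all
  have eta_src: "eta k X (src X x) (vadd p q) = cmp X ?ep ?eq"
    using eta_vadd[OF p q src_verts[OF x]] src_u by simp
  have eta_rng: "eta k X (rng X x) (vadd p q) = cmp X ?ep' ?eq'"
    using eta_vadd[OF p q rng_verts[OF x]] rng_u by simp
  show ?thesis
  proof (rule alpha_eqI[OF supp_in_vadd[OF p q] x mor(2)])
    show "dg X (alpha p ?u) = dg X x"
      "src X (alpha p ?u) = rng X (eta k X (src X x) (vadd p q))"
      using p q x mor src_pu src_ep eta_src by simp_all
    have "cmp X (alpha p ?u) (cmp X ?ep ?eq) = cmp X (cmp X ?ep' ?u) ?eq"
      using cmp_assoc[OF mor(2,5,3) src_pu src_ep] alpha_square(4)[OF p mor(1)] by simp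
    also have "\<dots> = cmp X ?ep' (cmp X ?eq' x)"
      using cmp_assoc[OF mor(6,1,3)] src_ep' rng_u src_u alpha_square(4)[OF q x] by simp
    also have "\<dots> = cmp X (cmp X ?ep' ?eq') x"
      using cmp_assoc[OF mor(6,4) x src_ep' src_eq'] by simp
    finally show "cmp X (alpha p ?u) (eta k X (src X x) (vadd p q)) =
        cmp X (eta k X (rng X x) (vadd p q)) x"
      using eta_src eta_rng by simp
  qed
qed

lemma alpha_inj:
  assumes p: "supp_in l p" and x: "x \<in> mor X" and y: "y \<in> mor X" and eq: "alpha p x = alpha p y"
  shows "x = y"
proof -
  have "rng X (eta k X (src X x) p) = rng X (eta k X (src X y) p)"
    using alpha_src[OF p x] alpha_src[OF p y] eq by simp
  then have "src X x = src X y"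
    using rng_eta_inj[OF p] x y by simp
  then have "cmp X (eta k X (rng X x) p) x = cmp X (eta k X (rng X y) p) y"
    using alpha_square(4)[OF p x] alpha_square(4)[OF p y] eq by simp
  then show ?thesis
    by (rule factorisation_unique(2)[rotated -1]) (use p x y in simp_all)
qed

lemma alpha_surj:
  assumes p: "supp_in l p" and y: "y \<in> mor X"
  obtains x where "x \<in> mor X" "dg X x = dg X y" "alpha p x = y"
proof -
  obtain f where f: "f \<in> mor X" "dg X f = emb k p" "rng X f = src X y"
    using path_rng_unique[OF p src_verts[OF y]] by blast
  have "dg X (cmp X y f) = vadd (emb k p) (dg X y)"
    using f y by (simp add: vadd_commute)
  then obtain e x where ex: "e \<in> mor X" "x \<in> mor X" "src X e = rng X x" "dg X e = emb k p"
    "dg X x = dg X y" "cmp X e x = cmp X y f"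
    by (rule factorisation_exists[OF cmp_mor[OF y f(1) f(3)[symmetric]]])
  have e: "eta k X (rng X x) p = e"
    using eta_eqI[OF p ex(1) ex(4)] ex(3) by simp
  have "src X x = src X f"
    using src_cmp[OF ex(1-3)] src_cmp[OF y f(1)] f(3) ex(6) by simp
  then have f': "eta k X (src X x) p = f"
    using eta_eqI[OF p f(1) f(2)] by simp
  have "alpha p x = y"
    by (rule alpha_eqI[OF p ex(2) y]) (use ex e f f' in simp_all)
  then show ?thesis
    using that ex by blast
qed

abbreviation horizontal :: "'a set" where
  "horizontal \<equiv> mor (restrictk k X)"

lemma alpha_iso:
  assumes p: "supp_in l p"
  shows "graph_iso (restrictk k X) (restrictk k X) (alpha p)"
proof -
  have "is_functor (restrictk k X) (restrictk k X) (alpha p)"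
    unfolding is_functor_def
  proof (intro conjI ballI impI)
    fix x assume x: "x \<in> horizontal"
    then show "alpha p x \<in> horizontal"
      using p by simp
    show "alpha p (src (restrictk k X) x) = src (restrictk k X) (alpha p x)"
      "alpha p (rng (restrictk k X) x) = rng (restrictk k X) (alpha p x)"
      using x p alpha_vertex alpha_src alpha_rng by simp_all
  next
    fix x y assume "x \<in> horizontal" "y \<in> horizontal" "src (restrictk k X) x = rng (restrictk k X) y"
    then show "alpha p (cmp (restrictk k X) x y) = cmp (restrictk k X) (alpha p x) (alpha p y)"
      using alpha_cmp[OF p] by simp
  qed
  moreover have "inj_on (alpha p) horizontal"
    using alpha_inj[OF p] by (auto intro: inj_onI)
  moreover have "alpha p ` horizontal = horizontal"
  proof
    show "alpha p ` horizontal \<subseteq> horizontal"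
      using p by auto
    show "horizontal \<subseteq> alpha p ` horizontal"
    proof
      fix y assume y: "y \<in> horizontal"
      then obtain x where "x \<in> mor X" "dg X x = dg X y" "alpha p x = y"
        using alpha_surj[OF p] by auto
      then show "y \<in> alpha p ` horizontal"
        using y by force
    qed
  qed
  ultimately show ?thesis
    using p by (auto simp: graph_iso_def bij_betw_def)
qed

sublocale alpha: nat_action l horizontal alpha
proof
  show "bij_betw (alpha p) horizontal horizontal" if "supp_in l p" for p
    using alpha_iso[OF that] by (simp add: graph_iso_def)
  show "alpha (\<lambda>_. 0) x = x" if "x \<in> horizontal" for x
    using that alpha_zero by simp
  show "alpha (vadd p q) x = alpha p (alpha q x)" if "supp_in l p" "supp_in l q" "x \<in> horizontal"
    for p q x
    using that alpha_vadd by simp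
qed

lemma int_ext_iso:
  assumes m: "supp_in l m"
  shows "graph_iso (restrictk k X) (restrictk k X) (alpha.int_ext m)"
proof -
  have "graph_iso (restrictk k X) (restrictk k X) (inv_into horizontal (alpha (\<lambda>i. nat (- m i))))"
    using graph_iso_inv[OF alpha_iso[OF supp_in_neg_part[OF m]]] by (auto simp: supp_in_def)
  from graph_iso_comp[OF this alpha_iso[OF supp_in_pos_part[OF m]]] show ?thesis
    unfolding alpha.int_ext_def[abs_def] by simp
qed

lemma prop36_action_int_ext: "prop36_action k l X alpha.int_ext"
  unfolding prop36_action_def is_action_def
  using int_ext_iso alpha.int_ext_zero alpha.int_ext_add alpha.int_ext_intv
  by (simp add: alpha_def)

lemma prop36_action_unique:
  assumes b: "prop36_action k l X b" and m: "supp_in l m" and x: "x \<in> horizontal"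
  shows "b m x = alpha.int_ext m x"
proof (rule alpha.int_ext_unique[OF _ _ _ m x])
  show "b m x \<in> horizontal" if "supp_in l m" "x \<in> horizontal" for m x
    using b that unfolding prop36_action_def is_action_def graph_iso_def by (meson bij_betwE)
  show "b (\<lambda>i. m i + n i) x = b m (b n x)" if "supp_in l m" "supp_in l n" "x \<in> horizontal"
    for m n x
    using b that unfolding prop36_action_def is_action_def by blast
  show "b (intv p) x = alpha p x" if "supp_in l p" "x \<in> horizontal" for p x
    using b that unfolding prop36_action_def alpha_def by blast
qed

section \<open>The isomorphism onto the crossed product\<close>

definition dg_k :: "'a \<Rightarrow> nat \<Rightarrow> nat" where
  "dg_k x = (\<lambda>i. if i < k then dg X x i else 0)"

definition dg_l :: "'a \<Rightarrow> nat \<Rightarrow> nat" where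
  "dg_l x = (\<lambda>j. dg X x (k + j))"

definition to_crossed :: "'a \<Rightarrow> 'a \<times> (nat \<Rightarrow> nat)" where
  "to_crossed x = (seg X x (dg_k x), dg_l x)"

lemma supp_in_dg_k: "supp_in k (dg_k x)"
  by (simp add: supp_in_def dg_k_def)

lemma supp_in_dg_l: "x \<in> mor X \<Longrightarrow> supp_in l (dg_l x)"
  using dg_supp_in[of x] by (simp add: supp_in_def dg_l_def)

lemma dg_split: "x \<in> mor X \<Longrightarrow> dg X x = vadd (dg_k x) (emb k (dg_l x))"
  by (auto simp: dg_k_def dg_l_def emb_def)

lemma horizontal_factor:
  assumes x: "x \<in> mor X"
  shows "seg X x (dg_k x) \<in> mor X" "dg X (seg X x (dg_k x)) = dg_k x"
    "src X (seg X x (dg_k x)) = rng X (eta k X (src X x) (dg_l x))"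
    "rng X (seg X x (dg_k x)) = rng X x"
    "cmp X (seg X x (dg_k x)) (eta k X (src X x) (dg_l x)) = x"
proof -
  obtain u w where uw: "u \<in> mor X" "w \<in> mor X" "src X u = rng X w" "dg X u = dg_k x"
    "dg X w = emb k (dg_l x)" "cmp X u w = x"
    by (rule factorisation_exists[OF x dg_split[OF x]])
  have "seg X x (dg_k x) = u"
    by (rule seg_eqI[OF uw(1-3) uw(6) uw(4)])
  moreover have "eta k X (src X x) (dg_l x) = w"
    using eta_eqI[OF supp_in_dg_l[OF x] uw(2) uw(5)] src_cmp[OF uw(1-3)] uw(6) by simp
  moreover have "rng X u = rng X x"
    using rng_cmp[OF uw(1-3)] uw(6) by simp
  ultimately show "seg X x (dg_k x) \<in> mor X" "dg X (seg X x (dg_k x)) = dg_k x"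
    "src X (seg X x (dg_k x)) = rng X (eta k X (src X x) (dg_l x))"
    "rng X (seg X x (dg_k x)) = rng X x"
    "cmp X (seg X x (dg_k x)) (eta k X (src X x) (dg_l x)) = x"
    using uw by simp_all
qed

lemma to_crossed_vertex:
  assumes v: "v \<in> verts X"
  shows "to_crossed v = (v, \<lambda>_. 0)"
proof -
  have "seg X v (\<lambda>_. 0) = v"
    by (rule seg_eqI[of v v]) (use v cmp_src[of v] in simp_all)
  moreover have "dg_k v = (\<lambda>_. 0)" "dg_l v = (\<lambda>_. 0)"
    using v by (simp_all add: dg_k_def dg_l_def fun_eq_iff)
  ultimately show ?thesis
    by (simp add: to_crossed_def)
qed

lemma to_crossed_mor: "x \<in> mor X \<Longrightarrow> to_crossed x \<in> mor (crossed k l (restrictk k X) alpha.int_ext)"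
  using horizontal_factor[of x] supp_in_dg_k supp_in_dg_l by (simp add: to_crossed_def)

lemma to_crossed_cmp:
  assumes x: "x \<in> mor X" and y: "y \<in> mor X" and xy: "src X x = rng X y"
  shows "to_crossed (cmp X x y) =
           (cmp X (seg X x (dg_k x)) (alpha (dg_l x) (seg X y (dg_k y))), vadd (dg_l x) (dg_l y))"
proof -
  let ?u = "seg X x (dg_k x)" and ?v = "seg X y (dg_k y)" and ?p = "dg_l x"
  let ?ex = "eta k X (src X x) ?p" and ?ey = "eta k X (src X y) (dg_l y)"
  let ?v' = "alpha ?p ?v" and ?ev = "eta k X (src X ?v) ?p"
  have p: "supp_in l ?p"
    using supp_in_dg_l[OF x] .
  have u: "?u \<in> mor X" "src X ?u = rng X ?ex" "cmp X ?u ?ex = x"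
    using horizontal_factor[OF x] by simp_all
  have v: "?v \<in> mor X" "src X ?v = rng X ?ey" "cmp X ?v ?ey = y" "rng X ?v = rng X y"
    using horizontal_factor[OF y] by simp_all
  have ex: "?ex = eta k X (rng X ?v) ?p"
    using v(4) xy by simp
  have mor: "?ex \<in> mor X" "?ey \<in> mor X" "?ev \<in> mor X" "?v' \<in> mor X"
    using p supp_in_dg_l[OF y] x y v(1) by simp_all
  have sq: "cmp X ?v' ?ev = cmp X ?ex ?v"
    using alpha_square(4)[OF p v(1)] ex by simp
  have src_v': "src X ?v' = rng X ?ev" and uv': "src X ?u = rng X ?v'"
    using alpha_src[OF p v(1)] alpha_rng[OF p v(1)] u(2) ex by simp_all
  have src_ev: "src X ?ev = rng X ?ey" and src_ex: "src X ?ex = rng X ?v"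
    using p supp_in_dg_l[OF y] y v(1,2) ex by simp_all
  have "cmp X (cmp X ?u ?v') (cmp X ?ev ?ey) = cmp X ?u (cmp X ?v' (cmp X ?ev ?ey))"
    by (rule cmp_assoc[OF u(1) mor(4) cmp_mor[OF mor(3,2) src_ev] uv'])
      (use rng_cmp[OF mor(3,2) src_ev] src_v' in simp)
  also have "\<dots> = cmp X ?u (cmp X (cmp X ?ex ?v) ?ey)"
    using cmp_assoc[OF mor(4,3,2) src_v' src_ev] sq by simp
  also have "\<dots> = cmp X ?u (cmp X ?ex y)"
    using cmp_assoc[OF mor(1) v(1) mor(2) src_ex v(2)] v(3) by simp
  also have "\<dots> = cmp X x y"
    using cmp_assoc[OF u(1) mor(1) y u(2)] src_ex v(4) u(3) xy by simp
  finally have "cmp X (cmp X ?u ?v') (cmp X ?ev ?ey) = cmp X x y" .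
  moreover have "dg X (cmp X ?u ?v') = dg_k (cmp X x y)"
  proof -
    have "dg_k (cmp X x y) = vadd (dg_k x) (dg_k y)"
      using x y xy by (auto simp: dg_k_def)
    then show ?thesis
      using dg_cmp[OF u(1) mor(4) uv'] alpha_dg[OF p v(1)]
        horizontal_factor(2)[OF x] horizontal_factor(2)[OF y] by simp
  qed
  ultimately have "seg X (cmp X x y) (dg_k (cmp X x y)) = cmp X ?u ?v'"
    by (intro seg_eqI[OF cmp_mor[OF u(1) mor(4) uv'] cmp_mor[OF mor(3,2) src_ev]])
      (use src_cmp[OF u(1) mor(4) uv'] rng_cmp[OF mor(3,2) src_ev] src_v' in simp_all)
  moreover have "dg_l (cmp X x y) = vadd ?p (dg_l y)"
    using x y xy by (auto simp: dg_l_def)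
  ultimately show ?thesis
    by (simp add: to_crossed_def)
qed

abbreviation crossed_product :: "('a \<times> (nat \<Rightarrow> nat)) kgraph" where
  "crossed_product \<equiv> crossed k l (restrictk k X) alpha.int_ext"

lemma to_crossed_functor: "is_functor X crossed_product to_crossed"
  unfolding is_functor_def
proof (intro conjI ballI impI)
  fix x assume x: "x \<in> mor X"
  show "to_crossed x \<in> mor crossed_product"
    using to_crossed_mor[OF x] .
  have "src X (seg X x (dg_k x)) = alpha (dg_l x) (src X x)"
    using horizontal_factor(3)[OF x] alpha_vertex[OF supp_in_dg_l[OF x] src_verts[OF x]] by simp
  then have "alpha.int_ext (\<lambda>i. - int (dg_l x i)) (src X (seg X x (dg_k x))) = src X x"
    using alpha.int_ext_neg_intv[OF supp_in_dg_l[OF x]] x by (simp add: dg_src supp_in_def)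
  then show "to_crossed (src X x) = src crossed_product (to_crossed x)"
    using to_crossed_vertex[OF src_verts[OF x]] by (simp add: to_crossed_def)
  show "to_crossed (rng X x) = rng crossed_product (to_crossed x)"
    using to_crossed_vertex[OF rng_verts[OF x]] horizontal_factor(4)[OF x]
    by (simp add: to_crossed_def)
next
  fix x y assume x: "x \<in> mor X" and y: "y \<in> mor X" and xy: "src X x = rng X y"
  have "seg X y (dg_k y) \<in> horizontal"
    using horizontal_factor(1,2)[OF y] supp_in_dg_k by simp
  then show "to_crossed (cmp X x y) = cmp crossed_product (to_crossed x) (to_crossed y)"
    using to_crossed_cmp[OF x y xy] alpha.int_ext_intv[OF supp_in_dg_l[OF x]]
    by (simp add: to_crossed_def)
qed

lemma to_crossed_inj: "inj_on to_crossed (mor X)"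
proof (rule inj_onI)
  fix x y assume x: "x \<in> mor X" and y: "y \<in> mor X" and eq: "to_crossed x = to_crossed y"
  then have seg: "seg X x (dg_k x) = seg X y (dg_k y)" and dg_l: "dg_l x = dg_l y"
    by (simp_all add: to_crossed_def)
  have "rng X (eta k X (src X x) (dg_l x)) = rng X (eta k X (src X y) (dg_l x))"
    using horizontal_factor(3)[OF x] horizontal_factor(3)[OF y] seg dg_l by simp
  then have "src X x = src X y"
    using rng_eta_inj[OF supp_in_dg_l[OF x]] x y by simp
  then show "x = y"
    using horizontal_factor(5)[OF x] horizontal_factor(5)[OF y] seg dg_l by metis
qed

lemma to_crossed_image: "to_crossed ` mor X = mor crossed_product"
proof
  show "to_crossed ` mor X \<subseteq> mor crossed_product"
    using to_crossed_mor by blast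
  show "mor crossed_product \<subseteq> to_crossed ` mor X"
  proof
    fix z assume "z \<in> mor crossed_product"
    then obtain u q where z: "z = (u, q)" and u: "u \<in> mor X" "supp_in k (dg X u)"
      and q: "supp_in l q"
      by auto
    obtain f where f: "f \<in> mor X" "dg X f = emb k q" "rng X f = src X u"
      using path_rng_unique[OF q src_verts[OF u(1)]] by blast
    let ?x = "cmp X u f"
    have dg_x: "dg X ?x = vadd (dg X u) (emb k q)"
      using u f by simp
    have "dg_k ?x = dg X u" "dg_l ?x = q"
      using dg_x u(2) by (auto simp: dg_k_def dg_l_def emb_def supp_in_def fun_eq_iff)
    moreover have "seg X ?x (dg X u) = u"
      by (rule seg_eqI[OF u(1) f(1)]) (use f in simp_all)
    ultimately have "to_crossed ?x = z"
      using z by (simp add: to_crossed_def)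
    moreover have "?x \<in> mor X"
      using u f by simp
    ultimately show "z \<in> to_crossed ` mor X"
      by blast
  qed
qed

lemma to_crossed_iso: "graph_iso X crossed_product to_crossed"
proof -
  have "dg crossed_product (to_crossed x) = dg X x" if x: "x \<in> mor X" for x
    using horizontal_factor(2)[OF x] dg_supp_in[OF x]
    by (auto simp: to_crossed_def dg_k_def dg_l_def supp_in_def fun_eq_iff)
  then show ?thesis
    using to_crossed_functor to_crossed_inj to_crossed_image
    by (simp add: graph_iso_def bij_betw_def)
qed

end

theorem proposition3p6:
  fixes k l :: nat and X :: "'a kgraph"
  assumes "kgraph (k + l) X"
    and "\<forall>v\<in>verts X. \<forall>j<l.
           card {x \<in> mor X. dg X x = emb k (unitv j) \<and> rng X x = v} = 1 \<and>
           card {x \<in> mor X. dg X x = emb k (unitv j) \<and> src X x = v} = 1"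
  shows "(\<forall>v\<in>verts X. \<forall>m. supp_in l m \<longrightarrow>
            (\<exists>!e. e \<in> mor X \<and> dg X e = emb k m \<and> src X e = v)) \<and>
         (\<exists>a. prop36_action k l X a \<and>
            (\<forall>b. prop36_action k l X b \<longrightarrow>
               (\<forall>m. supp_in l m \<longrightarrow> (\<forall>x\<in>mor (restrictk k X). b m x = a m x))) \<and>
            (\<exists>F. graph_iso X (crossed k l (restrictk k X) a) F))"
proof -
  interpret unique_l_edges k l X
    using assms by (simp add: unique_l_edges_def unique_l_edges_axioms_def higher_rank_graph_def)
  show ?thesis
    using path_src_unique prop36_action_int_ext prop36_action_unique to_crossed_iso by blast
qed

end
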